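(* Suppose that $G = \left( \begin{bmatrix} m & k \end{bmatrix}, \eta, u \right)$ is a conditional of $F= \left( \begin{bmatrix} f \\ g \end{bmatrix}, \begin{bmatrix} \alpha & \beta \\ \beta^\dagger & \delta \end{bmatrix}, \begin{bmatrix} s \\ t \end{bmatrix} \right)$. Then the following equalities hold: \begin{align*} k = g - m \circ f &\quad & m \circ \alpha = \beta^\dagger &\quad & \eta = \delta - m \circ \beta &\quad & u = t - m\circ s \end{align*}
   Context: Let $(\mathbb{X}, \dagger)$ be a dagger additive category (a dagger category enriched in abelian groups with additive dagger and finite biproducts satisfying $\pi_j^\dagger = \iota_j$; maps between biproducts are written as matrices and the dagger acts as conjugate transpose) and fix an object $X$. A map $p$ is $\dagger$-positive if $p = \phi^\dagger \circ \phi$ for some $\phi$. The Gauss construction $\mathfrak{G}\left[ (\mathbb{X}, \dagger) \right]_X$ is the Markov category with the objects of $\mathbb{X}$, maps $A \to B$ the triples $(f,p,x)$ with $f: A \to B$, $p: B \to B$ $\dagger$-positive, $x: X \to B$; identities $(\mathsf{id}_A,0,0)$; composition $(g,q,y) \circ (f,p,x) = (g \circ f, q + g \circ p \circ g^\dagger, y + g \circ x)$; $A \otimes B = A \oplus B$, $(f,p,x) \otimes (g,q,y) = \left(f \oplus g, p \oplus q, \begin{bmatrix} x \\ y \end{bmatrix}\right)$; identity maps $\mathsf{Id}_A = (\mathsf{id}_A,0,0)$, copy $\mathsf{copy}_A = \left(\begin{bmatrix} \mathsf{id}_A \\ \mathsf{id}_A \end{bmatrix}, 0, 0\right)$, delete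 $\mathsf{del}_A = (0,0,0): A \to \mathsf{0}$. Here $F: A \to B \otimes C$ is a map of $\mathfrak{G}\left[ (\mathbb{X}, \dagger) \right]_X$ with $f: A \to B$, $g: A \to C$, $\alpha: B \to B$, $\beta: C \to B$, $\delta: C \to C$, $s: X \to B$, $t: X \to C$ (the second component is $\dagger$-positive, which forces its lower-left entry to be $\beta^\dagger$), and $G: B \otimes A \to C$ has $m: B \to C$, $k: A \to C$, $\eta: C \to C$ $\dagger$-positive, $u: X \to C$. $G$ is a conditional of $F$ if $(\mathsf{Id}_B \otimes G) \circ (\mathsf{copy}_B \otimes \mathsf{Id}_A) \circ (\mathsf{Id}_B \otimes \mathsf{del}_C \otimes \mathsf{Id}_A) \circ (F \otimes \mathsf{Id}_A) \circ \mathsf{copy}_A = F$. *)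

theory Defs
  imports Main
begin

text \<open>A dagger additive category, presented with explicit hom-sets.
  cmp g f is the composite g after f; add/neg/zero give the abelian group
  enrichment; bip A B is the chosen biproduct A (+) B with projections p1, p2
  and injections i1, i2; zobj is the zero object (empty biproduct).\<close>

record ('o, 'm) dacat =
  hom :: "'o \<Rightarrow> 'o \<Rightarrow> 'm set"
  cmp :: "'m \<Rightarrow> 'm \<Rightarrow> 'm"
  idm :: "'o \<Rightarrow> 'm"
  zero :: "'o \<Rightarrow> 'o \<Rightarrow> 'm"
  add :: "'m \<Rightarrow> 'm \<Rightarrow> 'm"
  neg :: "'m \<Rightarrow> 'm"
  dag :: "'m \<Rightarrow> 'm"
  bip :: "'o \<Rightarrow> 'o \<Rightarrow> 'o"
  p1 :: "'o \<Rightarrow> 'o \<Rightarrow> 'm"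
  p2 :: "'o \<Rightarrow> 'o \<Rightarrow> 'm"
  i1 :: "'o \<Rightarrow> 'o \<Rightarrow> 'm"
  i2 :: "'o \<Rightarrow> 'o \<Rightarrow> 'm"
  zobj :: 'o

locale dagger_additive =
  fixes K :: "('o, 'm) dacat"
  assumes cmp_hom: "\<lbrakk>f \<in> hom K A B; g \<in> hom K B C\<rbrakk> \<Longrightarrow> cmp K g f \<in> hom K A C"
    and cmp_assoc: "\<lbrakk>f \<in> hom K A B; g \<in> hom K B C; h \<in> hom K C D\<rbrakk>
                     \<Longrightarrow> cmp K h (cmp K g f) = cmp K (cmp K h g) f"
    and idm_hom: "idm K A \<in> hom K A A"
    and idm_left: "f \<in> hom K A B \<Longrightarrow> cmp K (idm K B) f = f"
    and idm_right: "f \<in> hom K A B \<Longrightarrow> cmp K f (idm K A) = f"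
    and zero_hom: "zero K A B \<in> hom K A B"
    and add_hom: "\<lbrakk>f \<in> hom K A B; g \<in> hom K A B\<rbrakk> \<Longrightarrow> add K f g \<in> hom K A B"
    and neg_hom: "f \<in> hom K A B \<Longrightarrow> neg K f \<in> hom K A B"
    and add_assoc: "\<lbrakk>f \<in> hom K A B; g \<in> hom K A B; h \<in> hom K A B\<rbrakk>
                     \<Longrightarrow> add K (add K f g) h = add K f (add K g h)"
    and add_comm: "\<lbrakk>f \<in> hom K A B; g \<in> hom K A B\<rbrakk> \<Longrightarrow> add K f g = add K g f"
    and add_zero: "f \<in> hom K A B \<Longrightarrow> add K f (zero K A B) = f"
    and add_neg: "f \<in> hom K A B \<Longrightarrow> add K f (neg K f) = zero K A B"
    and cmp_add_left: "\<lbrakk>f \<in> hom K A B; g \<in> hom K B C; h \<in> hom K B C\<rbrakk>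
                     \<Longrightarrow> cmp K (add K g h) f = add K (cmp K g f) (cmp K h f)"
    and cmp_add_right: "\<lbrakk>f \<in> hom K A B; g \<in> hom K A B; h \<in> hom K B C\<rbrakk>
                     \<Longrightarrow> cmp K h (add K f g) = add K (cmp K h f) (cmp K h g)"
    and dag_hom: "f \<in> hom K A B \<Longrightarrow> dag K f \<in> hom K B A"
    and dag_dag: "f \<in> hom K A B \<Longrightarrow> dag K (dag K f) = f"
    and dag_cmp: "\<lbrakk>f \<in> hom K A B; g \<in> hom K B C\<rbrakk> \<Longrightarrow> dag K (cmp K g f) = cmp K (dag K f) (dag K g)"
    and dag_idm: "dag K (idm K A) = idm K A"
    and dag_add: "\<lbrakk>f \<in> hom K A B; g \<in> hom K A B\<rbrakk> \<Longrightarrow> dag K (add K f g) = add K (dag K f) (dag K g)"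
    and p1_hom: "p1 K A B \<in> hom K (bip K A B) A"
    and p2_hom: "p2 K A B \<in> hom K (bip K A B) B"
    and i1_hom: "i1 K A B \<in> hom K A (bip K A B)"
    and i2_hom: "i2 K A B \<in> hom K B (bip K A B)"
    and p1_i1: "cmp K (p1 K A B) (i1 K A B) = idm K A"
    and p2_i2: "cmp K (p2 K A B) (i2 K A B) = idm K B"
    and p1_i2: "cmp K (p1 K A B) (i2 K A B) = zero K B A"
    and p2_i1: "cmp K (p2 K A B) (i1 K A B) = zero K A B"
    and bip_sum: "add K (cmp K (i1 K A B) (p1 K A B)) (cmp K (i2 K A B) (p2 K A B)) = idm K (bip K A B)"
    and dag_p1: "dag K (p1 K A B) = i1 K A B"
    and dag_p2: "dag K (p2 K A B) = i2 K A B"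
    and zobj_initial: "hom K (zobj K) A = {zero K (zobj K) A}"
    and zobj_terminal: "hom K A (zobj K) = {zero K A (zobj K)}"

definition sub :: "('o, 'm) dacat \<Rightarrow> 'm \<Rightarrow> 'm \<Rightarrow> 'm" where
  "sub K f g = add K f (neg K g)"

definition dpos :: "('o, 'm) dacat \<Rightarrow> 'o \<Rightarrow> 'm \<Rightarrow> bool" where
  "dpos K B p \<longleftrightarrow> (\<exists>D. \<exists>\<phi> \<in> hom K B D. p = cmp K (dag K \<phi>) \<phi>)"

definition col :: "('o, 'm) dacat \<Rightarrow> 'o \<Rightarrow> 'o \<Rightarrow> 'm \<Rightarrow> 'm \<Rightarrow> 'm" where
  "col K B C f g = add K (cmp K (i1 K B C) f) (cmp K (i2 K B C) g)"

definition row :: "('o, 'm) dacat \<Rightarrow> 'o \<Rightarrow> 'o \<Rightarrow> 'm \<Rightarrow> 'm \<Rightarrow> 'm" where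
  "row K A B f g = add K (cmp K f (p1 K A B)) (cmp K g (p2 K A B))"

text \<open>2x2 matrix [a b; c d] : A (+) B \<rightarrow> C (+) D\<close>
definition mat2 :: "('o, 'm) dacat \<Rightarrow> 'o \<Rightarrow> 'o \<Rightarrow> 'o \<Rightarrow> 'o \<Rightarrow> 'm \<Rightarrow> 'm \<Rightarrow> 'm \<Rightarrow> 'm \<Rightarrow> 'm" where
  "mat2 K A B C D a b c d = col K C D (row K A B a b) (row K A B c d)"

definition dsum :: "('o, 'm) dacat \<Rightarrow> 'o \<Rightarrow> 'o \<Rightarrow> 'o \<Rightarrow> 'o \<Rightarrow> 'm \<Rightarrow> 'm \<Rightarrow> 'm" where
  "dsum K A B C D f g = mat2 K A C B D f (zero K C B) (zero K A D) g"

definition assoc_iso :: "('o, 'm) dacat \<Rightarrow> 'o \<Rightarrow> 'o \<Rightarrow> 'o \<Rightarrow> 'm" where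
  "assoc_iso K A B C =
     col K A (bip K B C) (cmp K (p1 K A B) (p1 K (bip K A B) C))
       (col K B C (cmp K (p2 K A B) (p1 K (bip K A B) C)) (p2 K (bip K A B) C))"

type_synonym 'a gmap = "'a \<times> 'a \<times> 'a"

definition gauss_hom :: "('o, 'm) dacat \<Rightarrow> 'o \<Rightarrow> 'o \<Rightarrow> 'o \<Rightarrow> 'm gmap set" where
  "gauss_hom K X A B = {(f, p, x). f \<in> hom K A B \<and> p \<in> hom K B B \<and> dpos K B p \<and> x \<in> hom K X B}"

definition gcomp :: "('o, 'm) dacat \<Rightarrow> 'm gmap \<Rightarrow> 'm gmap \<Rightarrow> 'm gmap" where
  "gcomp K G F = (case G of (g, q, y) \<Rightarrow> case F of (f, p, x) \<Rightarrow>
       (cmp K g f, add K q (cmp K (cmp K g p) (dag K g)), add K y (cmp K g x)))"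

definition gId :: "('o, 'm) dacat \<Rightarrow> 'o \<Rightarrow> 'o \<Rightarrow> 'm gmap" where
  "gId K X A = (idm K A, zero K A A, zero K X A)"

definition gtensor :: "('o, 'm) dacat \<Rightarrow> 'o \<Rightarrow> 'o \<Rightarrow> 'o \<Rightarrow> 'o \<Rightarrow> 'm gmap \<Rightarrow> 'm gmap \<Rightarrow> 'm gmap" where
  "gtensor K A B C D F G = (case F of (f, p, x) \<Rightarrow> case G of (g, q, y) \<Rightarrow>
       (dsum K A B C D f g, dsum K B B D D p q, col K B D x y))"

definition gcopy :: "('o, 'm) dacat \<Rightarrow> 'o \<Rightarrow> 'o \<Rightarrow> 'm gmap" where
  "gcopy K X A = (col K A A (idm K A) (idm K A), zero K (bip K A A) (bip K A A), zero K X (bip K A A))"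

definition gdel :: "('o, 'm) dacat \<Rightarrow> 'o \<Rightarrow> 'o \<Rightarrow> 'm gmap" where
  "gdel K X A = (zero K A (zobj K), zero K (zobj K) (zobj K), zero K X (zobj K))"

definition gassoc :: "('o, 'm) dacat \<Rightarrow> 'o \<Rightarrow> 'o \<Rightarrow> 'o \<Rightarrow> 'o \<Rightarrow> 'm gmap" where
  "gassoc K X A B C = (assoc_iso K A B C, zero K (bip K A (bip K B C)) (bip K A (bip K B C)),
                     zero K X (bip K A (bip K B C)))"

definition glunit :: "('o, 'm) dacat \<Rightarrow> 'o \<Rightarrow> 'o \<Rightarrow> 'm gmap" where
  "glunit K X A = (p2 K (zobj K) A, zero K A A, zero K X A)"

text \<open>G : B (x) A \<rightarrow> C is a conditional of F : A \<rightarrow> B (x) C: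
  (Id_B (x) G) o (copy_B (x) Id_A) o (Id_B (x) del_C (x) Id_A) o (F (x) Id_A) o copy_A = F,
  with associators and the left unitor 0 (x) A \<cong> A inserted explicitly.\<close>
definition is_conditional :: "('o, 'm) dacat \<Rightarrow> 'o \<Rightarrow> 'o \<Rightarrow> 'o \<Rightarrow> 'o \<Rightarrow> 'm gmap \<Rightarrow> 'm gmap \<Rightarrow> bool" where
  "is_conditional K X A B C G F \<longleftrightarrow>
     gcomp K (gtensor K B B (bip K B A) C (gId K X B) G)
      (gcomp K (gassoc K X B B A)
       (gcomp K (gtensor K B (bip K B B) A A (gcopy K X B) (gId K X A))
        (gcomp K (gtensor K B B (bip K (zobj K) A) A (gId K X B) (glunit K X A))
         (gcomp K (gtensor K B B (bip K C A) (bip K (zobj K) A) (gId K X B)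
                   (gtensor K C (zobj K) A A (gdel K X C) (gId K X A)))
          (gcomp K (gassoc K X B C A)
           (gcomp K (gtensor K A (bip K B C) A A F (gId K X A))
             (gcopy K X A)))))))
     = F"


end

(*
  A Gauss map (g, 0, 0) is deterministic, and post-composing it with (l, n P n\<^sup>\<dagger>, x) simply
  post-composes l, n and x with g. All the plumbing in the conditional equation (copies,
  deletion, unitor, associators) is deterministic, so its left-hand side evaluates to
    (col f (m f + k),  (0 \<oplus> \<eta>) + N S N\<^sup>\<dagger>,  col 0 u + col s (m s)),
  where S is the covariance of F and N = [1 0; m 0]. Since N [\<alpha> \<beta>; \<gamma> \<delta>] N\<^sup>\<dagger> is
  [\<alpha>, \<alpha> m\<^sup>\<dagger>; m \<alpha>, m \<alpha> m\<^sup>\<dagger>], comparing biproduct components with F gives m f + k = g,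
  \<alpha> m\<^sup>\<dagger> = \<beta>, m \<alpha> = \<beta>\<^sup>\<dagger>, \<eta> + m \<beta> = \<delta> and u + m s = t.
*)

theory Submission
  imports Defs
begin

definition graph :: "('o, 'm) dacat \<Rightarrow> 'o \<Rightarrow> 'o \<Rightarrow> 'm \<Rightarrow> 'm" where
  "graph K B C m = col K B C (p1 K B C) (cmp K m (p1 K B C))"

context dagger_additive
begin

lemma col_hom [intro]:
  "a \<in> hom K Z B \<Longrightarrow> b \<in> hom K Z C \<Longrightarrow> col K B C a b \<in> hom K Z (bip K B C)"
  unfolding col_def by (meson add_hom cmp_hom i1_hom i2_hom)

lemma row_hom [intro]:
  "a \<in> hom K A Z \<Longrightarrow> b \<in> hom K B Z \<Longrightarrow> row K A B a b \<in> hom K (bip K A B) Z"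
  unfolding row_def by (meson add_hom cmp_hom p1_hom p2_hom)

lemma mat2_hom [intro]:
  "\<lbrakk>a \<in> hom K A C; b \<in> hom K B C; c \<in> hom K A D; d \<in> hom K B D\<rbrakk>
    \<Longrightarrow> mat2 K A B C D a b c d \<in> hom K (bip K A B) (bip K C D)"
  unfolding mat2_def by blast

lemma dsum_hom [intro]:
  "f \<in> hom K A B \<Longrightarrow> g \<in> hom K C D \<Longrightarrow> dsum K A B C D f g \<in> hom K (bip K A C) (bip K B D)"
  unfolding dsum_def by (blast intro: zero_hom)

lemma assoc_iso_hom [intro]:
  "assoc_iso K A B C \<in> hom K (bip K (bip K A B) C) (bip K A (bip K B C))"
  unfolding assoc_iso_def by (blast intro: cmp_hom p1_hom p2_hom)

lemmas hom_rules = cmp_hom idm_hom zero_hom add_hom neg_hom dag_hom p1_hom p2_hom i1_hom i2_hom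
  col_hom row_hom mat2_hom dsum_hom assoc_iso_hom

lemma zero_add: "f \<in> hom K A B \<Longrightarrow> add K (zero K A B) f = f"
  by (metis add_comm add_zero zero_hom)

lemma add_implies_sub:
  assumes "x \<in> hom K A B" "y \<in> hom K A B" "add K x y = z"
  shows "y = sub K z x"
proof -
  have "sub K z x = add K (add K y x) (neg K x)"
    unfolding sub_def using assms add_comm by metis
  also have "\<dots> = add K y (add K x (neg K x))" using assms by (simp add: add_assoc neg_hom)
  also have "\<dots> = y" using assms by (simp add: add_neg add_zero)
  finally show ?thesis by simp
qed

lemma add_idem_zero: "h \<in> hom K A B \<Longrightarrow> add K h h = h \<Longrightarrow> h = zero K A B"
  using add_implies_sub[of h A B h h] add_neg[of h A B] by (simp add: sub_def)

lemma cmp_zero_left: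
  assumes "f \<in> hom K A B"
  shows "cmp K (zero K B C) f = zero K A C"
proof (rule add_idem_zero)
  show "cmp K (zero K B C) f \<in> hom K A C" using assms by (blast intro: hom_rules)
  have "cmp K (zero K B C) f = cmp K (add K (zero K B C) (zero K B C)) f"
    by (simp add: add_zero zero_hom)
  also have "\<dots> = add K (cmp K (zero K B C) f) (cmp K (zero K B C) f)"
    using assms cmp_add_left zero_hom by blast
  finally show "add K (cmp K (zero K B C) f) (cmp K (zero K B C) f) = cmp K (zero K B C) f" ..
qed

lemma cmp_zero_right:
  assumes "g \<in> hom K B C"
  shows "cmp K g (zero K A B) = zero K A C"
proof (rule add_idem_zero)
  show "cmp K g (zero K A B) \<in> hom K A C" using assms by (blast intro: hom_rules)
  have "cmp K g (zero K A B) = cmp K g (add K (zero K A B) (zero K A B))"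
    by (simp add: add_zero zero_hom)
  also have "\<dots> = add K (cmp K g (zero K A B)) (cmp K g (zero K A B))"
    using assms cmp_add_right zero_hom by blast
  finally show "add K (cmp K g (zero K A B)) (cmp K g (zero K A B)) = cmp K g (zero K A B)" ..
qed

lemma dag_i1: "dag K (i1 K A B) = p1 K A B"
  by (metis dag_dag dag_p1 p1_hom)

lemma dag_i2: "dag K (i2 K A B) = p2 K A B"
  by (metis dag_dag dag_p2 p2_hom)

lemma col_p1_p2: "col K A B (p1 K A B) (p2 K A B) = idm K (bip K A B)"
  unfolding col_def by (rule bip_sum)

lemma i1_eq_col: "i1 K A B = col K A B (idm K A) (zero K A B)"
  unfolding col_def using idm_right[OF i1_hom] cmp_zero_right[OF i2_hom] add_zero[OF i1_hom]
  by simp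

lemma p1_col:
  assumes "a \<in> hom K Z B" "b \<in> hom K Z C"
  shows "cmp K (p1 K B C) (col K B C a b) = a"
proof -
  have "cmp K (p1 K B C) (col K B C a b)
      = add K (cmp K (cmp K (p1 K B C) (i1 K B C)) a) (cmp K (cmp K (p1 K B C) (i2 K B C)) b)"
    unfolding col_def
    using cmp_add_right[OF cmp_hom[OF assms(1) i1_hom] cmp_hom[OF assms(2) i2_hom] p1_hom]
      cmp_assoc[OF assms(1) i1_hom p1_hom] cmp_assoc[OF assms(2) i2_hom p1_hom] by simp
  also have "\<dots> = a" using assms by (simp add: p1_i1 p1_i2 idm_left cmp_zero_left add_zero)
  finally show ?thesis .
qed

lemma p2_col:
  assumes "a \<in> hom K Z B" "b \<in> hom K Z C"
  shows "cmp K (p2 K B C) (col K B C a b) = b"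
proof -
  have "cmp K (p2 K B C) (col K B C a b)
      = add K (cmp K (cmp K (p2 K B C) (i1 K B C)) a) (cmp K (cmp K (p2 K B C) (i2 K B C)) b)"
    unfolding col_def
    using cmp_add_right[OF cmp_hom[OF assms(1) i1_hom] cmp_hom[OF assms(2) i2_hom] p2_hom]
      cmp_assoc[OF assms(1) i1_hom p2_hom] cmp_assoc[OF assms(2) i2_hom p2_hom] by simp
  also have "\<dots> = b" using assms by (simp add: p2_i1 p2_i2 idm_left cmp_zero_left zero_add)
  finally show ?thesis .
qed

lemma col_eq_iff:
  assumes "a \<in> hom K Z B" "b \<in> hom K Z C" "c \<in> hom K Z B" "d \<in> hom K Z C"
  shows "col K B C a b = col K B C c d \<longleftrightarrow> a = c \<and> b = d"
  using p1_col[OF assms(1,2)] p1_col[OF assms(3,4)] p2_col[OF assms(1,2)] p2_col[OF assms(3,4)]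
  by metis

lemma col_eta:
  assumes "h \<in> hom K Z (bip K B C)"
  shows "h = col K B C (cmp K (p1 K B C) h) (cmp K (p2 K B C) h)"
proof -
  have "h = cmp K (idm K (bip K B C)) h" using assms idm_left by simp
  also have "\<dots> = col K B C (cmp K (p1 K B C) h) (cmp K (p2 K B C) h)"
    unfolding bip_sum[symmetric] col_def
    using cmp_add_left[OF assms cmp_hom[OF p1_hom i1_hom] cmp_hom[OF p2_hom i2_hom]]
      cmp_assoc[OF assms p1_hom i1_hom] cmp_assoc[OF assms p2_hom i2_hom] by simp
  finally show ?thesis .
qed

lemma row_i1:
  assumes "a \<in> hom K A Z" "b \<in> hom K B Z"
  shows "cmp K (row K A B a b) (i1 K A B) = a"
proof -
  have "cmp K (row K A B a b) (i1 K A B)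
      = add K (cmp K a (cmp K (p1 K A B) (i1 K A B))) (cmp K b (cmp K (p2 K A B) (i1 K A B)))"
    unfolding row_def
    using cmp_add_left[OF i1_hom cmp_hom[OF p1_hom assms(1)] cmp_hom[OF p2_hom assms(2)]]
      cmp_assoc[OF i1_hom p1_hom assms(1)] cmp_assoc[OF i1_hom p2_hom assms(2)] by simp
  also have "\<dots> = a" using assms by (simp add: p1_i1 p2_i1 idm_right cmp_zero_right add_zero)
  finally show ?thesis .
qed

lemma row_i2:
  assumes "a \<in> hom K A Z" "b \<in> hom K B Z"
  shows "cmp K (row K A B a b) (i2 K A B) = b"
proof -
  have "cmp K (row K A B a b) (i2 K A B)
      = add K (cmp K a (cmp K (p1 K A B) (i2 K A B))) (cmp K b (cmp K (p2 K A B) (i2 K A B)))"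
    unfolding row_def
    using cmp_add_left[OF i2_hom cmp_hom[OF p1_hom assms(1)] cmp_hom[OF p2_hom assms(2)]]
      cmp_assoc[OF i2_hom p1_hom assms(1)] cmp_assoc[OF i2_hom p2_hom assms(2)] by simp
  also have "\<dots> = b" using assms by (simp add: p1_i2 p2_i2 idm_right cmp_zero_right zero_add)
  finally show ?thesis .
qed

lemma row_eq_iff:
  assumes "a \<in> hom K A Z" "b \<in> hom K B Z" "c \<in> hom K A Z" "d \<in> hom K B Z"
  shows "row K A B a b = row K A B c d \<longleftrightarrow> a = c \<and> b = d"
  using row_i1[OF assms(1,2)] row_i1[OF assms(3,4)] row_i2[OF assms(1,2)] row_i2[OF assms(3,4)]
  by metis

lemma row_eta:
  assumes "h \<in> hom K (bip K A B) Z"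
  shows "h = row K A B (cmp K h (i1 K A B)) (cmp K h (i2 K A B))"
proof -
  have "h = cmp K h (idm K (bip K A B))" using assms idm_right by simp
  also have "\<dots> = row K A B (cmp K h (i1 K A B)) (cmp K h (i2 K A B))"
    unfolding bip_sum[symmetric] row_def
    using cmp_add_right[OF cmp_hom[OF p1_hom i1_hom] cmp_hom[OF p2_hom i2_hom] assms]
      cmp_assoc[OF p1_hom i1_hom assms] cmp_assoc[OF p2_hom i2_hom assms] by simp
  finally show ?thesis .
qed

lemma mat2_eq_iff:
  assumes "a \<in> hom K A C" "b \<in> hom K B C" "c \<in> hom K A D" "d \<in> hom K B D"
    and "a' \<in> hom K A C" "b' \<in> hom K B C" "c' \<in> hom K A D" "d' \<in> hom K B D"
  shows "mat2 K A B C D a b c d = mat2 K A B C D a' b' c' d'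
    \<longleftrightarrow> a = a' \<and> b = b' \<and> c = c' \<and> d = d'"
  unfolding mat2_def
  using col_eq_iff[OF row_hom[OF assms(1,2)] row_hom[OF assms(3,4)] row_hom[OF assms(5,6)]
      row_hom[OF assms(7,8)]] row_eq_iff[OF assms(1,2,5,6)] row_eq_iff[OF assms(3,4,7,8)]
  by blast

lemma col_zero: "col K B C (zero K Z B) (zero K Z C) = zero K Z (bip K B C)"
  unfolding col_def using cmp_zero_right[OF i1_hom] cmp_zero_right[OF i2_hom] add_zero[OF zero_hom]
  by simp

lemma row_zero: "row K A B (zero K A Z) (zero K B Z) = zero K (bip K A B) Z"
  unfolding row_def using cmp_zero_left[OF p1_hom] cmp_zero_left[OF p2_hom] add_zero[OF zero_hom]
  by simp

lemma dsum_zero: "dsum K A B C D (zero K A B) (zero K C D) = zero K (bip K A C) (bip K B D)"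
  unfolding dsum_def mat2_def by (simp add: row_zero col_zero)

lemma col_cmp:
  assumes "a \<in> hom K Z B" "b \<in> hom K Z C" "h \<in> hom K W Z"
  shows "cmp K (col K B C a b) h = col K B C (cmp K a h) (cmp K b h)"
proof -
  have c: "col K B C a b \<in> hom K Z (bip K B C)" using assms by blast
  show ?thesis
    using col_eta[OF cmp_hom[OF assms(3) c]]
      cmp_assoc[OF assms(3) c p1_hom] cmp_assoc[OF assms(3) c p2_hom]
      p1_col[OF assms(1,2)] p2_col[OF assms(1,2)]
    by simp
qed

lemma cmp_row:
  assumes "a \<in> hom K A Z" "b \<in> hom K B Z" "h \<in> hom K Z W"
  shows "cmp K h (row K A B a b) = row K A B (cmp K h a) (cmp K h b)"
proof -
  have r: "row K A B a b \<in> hom K (bip K A B) Z" using assms by blast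
  show ?thesis
    using row_eta[OF cmp_hom[OF r assms(3)]]
      cmp_assoc[OF i1_hom r assms(3)] cmp_assoc[OF i2_hom r assms(3)]
      row_i1[OF assms(1,2)] row_i2[OF assms(1,2)]
    by simp
qed

lemma row_col:
  assumes "a \<in> hom K A Z" "b \<in> hom K B Z" "c \<in> hom K W A" "d \<in> hom K W B"
  shows "cmp K (row K A B a b) (col K A B c d) = add K (cmp K a c) (cmp K b d)"
proof -
  have cl: "col K A B c d \<in> hom K W (bip K A B)" using assms by blast
  show ?thesis unfolding row_def
    using cmp_add_left[OF cl cmp_hom[OF p1_hom assms(1)] cmp_hom[OF p2_hom assms(2)]]
      cmp_assoc[OF cl p1_hom assms(1), symmetric] cmp_assoc[OF cl p2_hom assms(2), symmetric]
      p1_col[OF assms(3,4)] p2_col[OF assms(3,4)]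
    by simp
qed

lemma dag_col:
  assumes "a \<in> hom K Z B" "b \<in> hom K Z C"
  shows "dag K (col K B C a b) = row K B C (dag K a) (dag K b)"
  unfolding col_def row_def
  using dag_add[OF cmp_hom[OF assms(1) i1_hom] cmp_hom[OF assms(2) i2_hom]]
    dag_cmp[OF assms(1) i1_hom] dag_cmp[OF assms(2) i2_hom] dag_i1 dag_i2
  by simp

lemma col_add:
  assumes "a \<in> hom K Z B" "b \<in> hom K Z C" "c \<in> hom K Z B" "d \<in> hom K Z C"
  shows "add K (col K B C a b) (col K B C c d) = col K B C (add K a c) (add K b d)"
proof -
  have c1: "col K B C a b \<in> hom K Z (bip K B C)" and c2: "col K B C c d \<in> hom K Z (bip K B C)"
    using assms by blast+
  show ?thesis
    using col_eta[OF add_hom[OF c1 c2]] cmp_add_right[OF c1 c2 p1_hom] cmp_add_right[OF c1 c2 p2_hom]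
      p1_col[OF assms(1,2)] p2_col[OF assms(1,2)] p1_col[OF assms(3,4)] p2_col[OF assms(3,4)]
    by simp
qed

lemma row_add:
  assumes "a \<in> hom K A Z" "b \<in> hom K B Z" "c \<in> hom K A Z" "d \<in> hom K B Z"
  shows "add K (row K A B a b) (row K A B c d) = row K A B (add K a c) (add K b d)"
proof -
  have r1: "row K A B a b \<in> hom K (bip K A B) Z" and r2: "row K A B c d \<in> hom K (bip K A B) Z"
    using assms by blast+
  show ?thesis
    using row_eta[OF add_hom[OF r1 r2]] cmp_add_left[OF i1_hom r1 r2] cmp_add_left[OF i2_hom r1 r2]
      row_i1[OF assms(1,2)] row_i2[OF assms(1,2)] row_i1[OF assms(3,4)] row_i2[OF assms(3,4)]
    by simp
qed

lemma mat2_add: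
  assumes "a \<in> hom K A C" "b \<in> hom K B C" "c \<in> hom K A D" "d \<in> hom K B D"
    and "a' \<in> hom K A C" "b' \<in> hom K B C" "c' \<in> hom K A D" "d' \<in> hom K B D"
  shows "add K (mat2 K A B C D a b c d) (mat2 K A B C D a' b' c' d')
    = mat2 K A B C D (add K a a') (add K b b') (add K c c') (add K d d')"
  unfolding mat2_def
  using col_add[OF row_hom[OF assms(1,2)] row_hom[OF assms(3,4)] row_hom[OF assms(5,6)] row_hom[OF assms(7,8)]]
    row_add[OF assms(1,2,5,6)] row_add[OF assms(3,4,7,8)]
  by simp

lemma dsum_col:
  assumes "f \<in> hom K A B" "g \<in> hom K C D" "a \<in> hom K Z A" "c \<in> hom K Z C"
  shows "cmp K (dsum K A B C D f g) (col K A C a c) = col K B D (cmp K f a) (cmp K g c)"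
  unfolding dsum_def mat2_def
  using col_cmp[OF row_hom[OF assms(1) zero_hom] row_hom[OF zero_hom assms(2)] col_hom[OF assms(3,4)]]
    row_col[OF assms(1) zero_hom assms(3,4)] row_col[OF zero_hom assms(2) assms(3,4)]
    cmp_zero_left[OF assms(3)] cmp_zero_left[OF assms(4)] add_zero[OF cmp_hom[OF assms(3,1)]]
    zero_add[OF cmp_hom[OF assms(4,2)]]
  by simp

lemma dsum_zero_right:
  assumes "f \<in> hom K A A"
  shows "dsum K A A C C f (zero K C C) = cmp K (cmp K (i1 K A C) f) (dag K (i1 K A C))"
proof -
  have f1: "cmp K f (p1 K A C) \<in> hom K (bip K A C) A" using assms by (blast intro: hom_rules)
  have "dsum K A A C C f (zero K C C) = col K A C (row K A C f (zero K C A)) (zero K (bip K A C) C)"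
    unfolding dsum_def mat2_def row_zero ..
  also have "\<dots> = cmp K (i1 K A C) (cmp K f (p1 K A C))"
    unfolding row_def col_def
    using cmp_zero_left[OF p2_hom] add_zero[OF f1] cmp_zero_right[OF i2_hom]
      add_zero[OF cmp_hom[OF f1 i1_hom]] by simp
  finally show ?thesis
    unfolding dag_i1 using cmp_assoc[OF p1_hom assms i1_hom] by simp
qed

lemma assoc_iso_col:
  assumes "a \<in> hom K Z A" "b \<in> hom K Z B" "c \<in> hom K Z C"
  shows "cmp K (assoc_iso K A B C) (col K (bip K A B) C (col K A B a b) c)
    = col K A (bip K B C) a (col K B C b c)"
proof -
  let ?v = "col K (bip K A B) C (col K A B a b) c"
  have ab: "col K A B a b \<in> hom K Z (bip K A B)" and v: "?v \<in> hom K Z (bip K (bip K A B) C)"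
    using assms by blast+
  have "cmp K (cmp K (p1 K A B) (p1 K (bip K A B) C)) ?v = a"
    using cmp_assoc[OF v p1_hom p1_hom, symmetric] p1_col[OF ab assms(3)] p1_col[OF assms(1,2)]
    by simp
  moreover have "cmp K (cmp K (p2 K A B) (p1 K (bip K A B) C)) ?v = b"
    using cmp_assoc[OF v p1_hom p2_hom, symmetric] p1_col[OF ab assms(3)] p2_col[OF assms(1,2)]
    by simp
  ultimately show ?thesis unfolding assoc_iso_def
    using col_cmp[OF cmp_hom[OF p1_hom p1_hom] col_hom[OF cmp_hom[OF p1_hom p2_hom] p2_hom] v]
      col_cmp[OF cmp_hom[OF p1_hom p2_hom] p2_hom v] p2_col[OF ab assms(3)]
    by simp
qed


lemma graph_mat2_graph_dag:
  assumes m: "m \<in> hom K B C" and \<alpha>: "\<alpha> \<in> hom K B B" and \<beta>: "\<beta> \<in> hom K C B"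
    and \<gamma>: "\<gamma> \<in> hom K B C" and \<delta>: "\<delta> \<in> hom K C C"
  shows "cmp K (cmp K (graph K B C m) (mat2 K B C B C \<alpha> \<beta> \<gamma> \<delta>)) (dag K (graph K B C m))
    = mat2 K B C B C \<alpha> (cmp K \<alpha> (dag K m)) (cmp K m \<alpha>) (cmp K m (cmp K \<alpha> (dag K m)))"
proof -
  let ?R1 = "row K B C \<alpha> \<beta>" and ?R2 = "row K B C \<gamma> \<delta>" and ?r = "row K B C \<alpha> (cmp K \<alpha> (dag K m))"
  have R1: "?R1 \<in> hom K (bip K B C) B" and R2: "?R2 \<in> hom K (bip K B C) C"
    and S: "col K B C ?R1 ?R2 \<in> hom K (bip K B C) (bip K B C)" using assms by blast+
  have mp: "cmp K m (p1 K B C) \<in> hom K (bip K B C) C" using p1_hom m by (rule cmp_hom)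
  have i1m: "cmp K (i1 K B C) (dag K m) \<in> hom K C (bip K B C)" using dag_hom[OF m] i1_hom by (rule cmp_hom)
  have graph_dag: "dag K (graph K B C m) = row K B C (i1 K B C) (cmp K (i1 K B C) (dag K m))"
    unfolding graph_def using dag_col[OF p1_hom mp] dag_cmp[OF p1_hom m] dag_p1 by simp
  have dh: "dag K (graph K B C m) \<in> hom K (bip K B C) (bip K B C)"
    unfolding graph_dag using i1_hom i1m by blast
  have "cmp K (graph K B C m) (col K B C ?R1 ?R2) = col K B C ?R1 (cmp K m ?R1)"
    unfolding graph_def using col_cmp[OF p1_hom mp S] p1_col[OF R1 R2] cmp_assoc[OF S p1_hom m] by simp
  moreover have "cmp K ?R1 (dag K (graph K B C m)) = ?r"
    unfolding graph_dag
    using cmp_row[OF i1_hom i1m R1] row_i1[OF \<alpha> \<beta>] cmp_assoc[OF dag_hom[OF m] i1_hom R1] by simp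
  ultimately show ?thesis unfolding mat2_def
    using col_cmp[OF R1 cmp_hom[OF R1 m] dh] cmp_assoc[OF dh R1 m]
      cmp_row[OF \<alpha> cmp_hom[OF dag_hom[OF m] \<alpha>] m]
    by simp
qed

lemma gcomp_det_right:
  assumes "g \<in> hom K B C" "q \<in> hom K C C" "y \<in> hom K X C"
  shows "gcomp K (g, q, y) (f, zero K B B, zero K X B) = (cmp K g f, q, y)"
  unfolding gcomp_def
  using assms cmp_zero_right[OF assms(1)] cmp_zero_left[OF dag_hom[OF assms(1)]] by (simp add: add_zero)

lemma gcomp_sandwich:
  assumes "g \<in> hom K B C" "n \<in> hom K S B" "P \<in> hom K S S"
  shows "gcomp K (g, q, y) (l, cmp K (cmp K n P) (dag K n), x)
    = (cmp K g l, add K q (cmp K (cmp K (cmp K g n) P) (dag K (cmp K g n))), add K y (cmp K g x))"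
proof -
  have nP: "cmp K n P \<in> hom K S B" using assms by (blast intro: hom_rules)
  have "cmp K (cmp K g (cmp K (cmp K n P) (dag K n))) (dag K g)
      = cmp K (cmp K (cmp K g (cmp K n P)) (dag K n)) (dag K g)"
    using cmp_assoc[OF dag_hom[OF assms(2)] nP assms(1)] by simp
  also have "\<dots> = cmp K (cmp K g (cmp K n P)) (cmp K (dag K n) (dag K g))"
    using cmp_assoc[OF dag_hom[OF assms(1)] dag_hom[OF assms(2)] cmp_hom[OF nP assms(1)]] by simp
  also have "\<dots> = cmp K (cmp K (cmp K g n) P) (dag K (cmp K g n))"
    using cmp_assoc[OF assms(3) assms(2) assms(1)] dag_cmp[OF assms(2) assms(1)] by simp
  finally show ?thesis unfolding gcomp_def by simp
qed

lemma gcomp_det_sandwich: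
  assumes "g \<in> hom K B C" "n \<in> hom K S B" "P \<in> hom K S S" "x \<in> hom K X B"
  shows "gcomp K (g, zero K C C, zero K X C) (l, cmp K (cmp K n P) (dag K n), x)
    = (cmp K g l, cmp K (cmp K (cmp K g n) P) (dag K (cmp K g n)), cmp K g x)"
proof -
  have "cmp K g n \<in> hom K S C" using assms by (blast intro: hom_rules)
  then have "cmp K (cmp K (cmp K g n) P) (dag K (cmp K g n)) \<in> hom K C C"
    using assms by (blast intro: hom_rules)
  then show ?thesis unfolding gcomp_sandwich[OF assms(1-3)]
    using assms by (simp add: zero_add hom_rules)
qed

lemma gtensor_det:
  "gtensor K A B C D (f, zero K B B, zero K X B) (g, zero K D D, zero K X D)
    = (dsum K A B C D f g, zero K (bip K B D) (bip K B D), zero K X (bip K B D))"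
  unfolding gtensor_def by (simp add: dsum_zero col_zero)


lemma conditional_wiring_col:
  assumes m: "m \<in> hom K B C" and k: "k \<in> hom K A C"
    and a: "a \<in> hom K Z B" and b: "b \<in> hom K Z C" and c: "c \<in> hom K Z A"
  shows "cmp K (dsum K B B (bip K B A) C (idm K B) (row K B A m k))
         (cmp K (assoc_iso K B B A)
          (cmp K (dsum K B (bip K B B) A A (col K B B (idm K B) (idm K B)) (idm K A))
           (cmp K (dsum K B B (bip K (zobj K) A) A (idm K B) (p2 K (zobj K) A))
            (cmp K (dsum K B B (bip K C A) (bip K (zobj K) A) (idm K B)
                     (dsum K C (zobj K) A A (zero K C (zobj K)) (idm K A)))
             (cmp K (assoc_iso K B C A) (col K (bip K B C) A (col K B C a b) c))))))
   = col K B C a (add K (cmp K m a) (cmp K k c))"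
proof -
  have z: "zero K Z (zobj K) \<in> hom K Z (zobj K)" by (rule zero_hom)
  have "cmp K (assoc_iso K B C A) (col K (bip K B C) A (col K B C a b) c)
      = col K B (bip K C A) a (col K C A b c)"
    by (rule assoc_iso_col[OF a b c])
  moreover have "cmp K (dsum K B B (bip K C A) (bip K (zobj K) A) (idm K B)
                     (dsum K C (zobj K) A A (zero K C (zobj K)) (idm K A)))
                  (col K B (bip K C A) a (col K C A b c))
      = col K B (bip K (zobj K) A) a (col K (zobj K) A (zero K Z (zobj K)) c)"
    using dsum_col[OF idm_hom dsum_hom[OF zero_hom idm_hom] a col_hom[OF b c]]
      dsum_col[OF zero_hom idm_hom b c] idm_left[OF a] idm_left[OF c] cmp_zero_left[OF b]
    by simp
  moreover have "cmp K (dsum K B B (bip K (zobj K) A) A (idm K B) (p2 K (zobj K) A))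
                  (col K B (bip K (zobj K) A) a (col K (zobj K) A (zero K Z (zobj K)) c))
      = col K B A a c"
    using dsum_col[OF idm_hom p2_hom a col_hom[OF z c]] idm_left[OF a] p2_col[OF z c] by simp
  moreover have "cmp K (dsum K B (bip K B B) A A (col K B B (idm K B) (idm K B)) (idm K A))
                  (col K B A a c)
      = col K (bip K B B) A (col K B B a a) c"
    using dsum_col[OF col_hom[OF idm_hom idm_hom] idm_hom a c] col_cmp[OF idm_hom idm_hom a]
      idm_left[OF a] idm_left[OF c]
    by simp
  moreover have "cmp K (assoc_iso K B B A) (col K (bip K B B) A (col K B B a a) c)
      = col K B (bip K B A) a (col K B A a c)"
    by (rule assoc_iso_col[OF a a c])
  moreover have "cmp K (dsum K B B (bip K B A) C (idm K B) (row K B A m k))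
                  (col K B (bip K B A) a (col K B A a c))
      = col K B C a (add K (cmp K m a) (cmp K k c))"
    using dsum_col[OF idm_hom row_hom[OF m k] a col_hom[OF a c]] idm_left[OF a] row_col[OF m k a c]
    by simp
  ultimately show ?thesis by simp
qed

lemma is_conditional_iff:
  assumes f: "f \<in> hom K A B" and g: "g \<in> hom K A C"
    and S: "S \<in> hom K (bip K B C) (bip K B C)"
    and s: "s \<in> hom K X B" and t: "t \<in> hom K X C"
    and m: "m \<in> hom K B C" and k: "k \<in> hom K A C"
    and \<eta>: "\<eta> \<in> hom K C C" and u: "u \<in> hom K X C"
  shows "is_conditional K X A B C (row K B A m k, \<eta>, u) (col K B C f g, S, col K B C s t)
    \<longleftrightarrow> (col K B C f (add K (cmp K m f) k),
         add K (dsum K B B C C (zero K B B) \<eta>)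
           (cmp K (cmp K (graph K B C m) S) (dag K (graph K B C m))),
         add K (col K B C (zero K X B) u) (col K B C s (cmp K m s)))
       = (col K B C f g, S, col K B C s t)"
proof -
  define assoc1 where "assoc1 = assoc_iso K B C A"
  define del_C where "del_C = dsum K B B (bip K C A) (bip K (zobj K) A) (idm K B)
                     (dsum K C (zobj K) A A (zero K C (zobj K)) (idm K A))"
  define lunit where "lunit = dsum K B B (bip K (zobj K) A) A (idm K B) (p2 K (zobj K) A)"
  define copy_B where "copy_B = dsum K B (bip K B B) A A (col K B B (idm K B) (idm K B)) (idm K A)"
  define assoc2 where "assoc2 = assoc_iso K B B A"
  define id_G where "id_G = dsum K B B (bip K B A) C (idm K B) (row K B A m k)"
  define l where "l = col K (bip K B C) A (col K B C f g) (idm K A)"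
  \<comment> \<open>n is i1, written as a column so that the wiring lemma computes its image\<close>
  define n where "n = col K (bip K B C) A (col K B C (p1 K B C) (p2 K B C)) (zero K (bip K B C) A)"
  define x where "x = col K (bip K B C) A (col K B C s t) (zero K X A)"
  have assoc1_hom: "assoc1 \<in> hom K (bip K (bip K B C) A) (bip K B (bip K C A))"
    and del_C_hom: "del_C \<in> hom K (bip K B (bip K C A)) (bip K B (bip K (zobj K) A))"
    and lunit_hom: "lunit \<in> hom K (bip K B (bip K (zobj K) A)) (bip K B A)"
    and copy_B_hom: "copy_B \<in> hom K (bip K B A) (bip K (bip K B B) A)"
    and assoc2_hom: "assoc2 \<in> hom K (bip K (bip K B B) A) (bip K B (bip K B A))"
    and id_G_hom: "id_G \<in> hom K (bip K B (bip K B A)) (bip K B C)"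
    and nh: "n \<in> hom K (bip K B C) (bip K (bip K B C) A)"
    and xh: "x \<in> hom K X (bip K (bip K B C) A)"
    unfolding assoc1_def del_C_def lunit_def copy_B_def assoc2_def id_G_def n_def x_def
    using m k s t by (blast intro: hom_rules)+
  have copy_step: "gcomp K (gtensor K A (bip K B C) A A (col K B C f g, S, col K B C s t) (gId K X A))
          (gcopy K X A) = (l, cmp K (cmp K n S) (dag K n), x)"
  proof -
    have "n = i1 K (bip K B C) A" unfolding n_def col_p1_p2 i1_eq_col ..
    moreover have "cmp K (dsum K A (bip K B C) A A (col K B C f g) (idm K A))
        (col K A A (idm K A) (idm K A)) = l"
      unfolding l_def using dsum_col[OF col_hom[OF f g] idm_hom idm_hom idm_hom]
        idm_right[OF col_hom[OF f g]] idm_left[OF idm_hom] by simp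
    moreover have "dsum K (bip K B C) (bip K B C) A A S (zero K A A)
        \<in> hom K (bip K (bip K B C) A) (bip K (bip K B C) A)"
      using S by (blast intro: hom_rules)
    ultimately show ?thesis
      unfolding gtensor_def gId_def gcopy_def x_def
      using gcomp_det_right[OF dsum_hom[OF col_hom[OF f g] idm_hom]] dsum_zero_right[OF S] s t
      by (simp add: hom_rules)
  qed
  have tensor_del: "gtensor K B B (bip K C A) (bip K (zobj K) A) (gId K X B)
      (gtensor K C (zobj K) A A (gdel K X C) (gId K X A))
    = (del_C, zero K (bip K B (bip K (zobj K) A)) (bip K B (bip K (zobj K) A)),
        zero K X (bip K B (bip K (zobj K) A)))"
    unfolding gId_def gdel_def del_C_def by (simp add: gtensor_det)
  have tensor_lunit: "gtensor K B B (bip K (zobj K) A) A (gId K X B) (glunit K X A)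
      = (lunit, zero K (bip K B A) (bip K B A), zero K X (bip K B A))"
    unfolding gId_def glunit_def lunit_def by (simp add: gtensor_det)
  have tensor_copy: "gtensor K B (bip K B B) A A (gcopy K X B) (gId K X A)
      = (copy_B, zero K (bip K (bip K B B) A) (bip K (bip K B B) A), zero K X (bip K (bip K B B) A))"
    unfolding gId_def gcopy_def copy_B_def by (simp add: gtensor_det)
  have tensor_G: "gtensor K B B (bip K B A) C (gId K X B) (row K B A m k, \<eta>, u)
      = (id_G, dsum K B B C C (zero K B B) \<eta>, col K B C (zero K X B) u)"
    unfolding gtensor_def gId_def id_G_def by simp
  have wiring_l: "cmp K id_G (cmp K assoc2 (cmp K copy_B (cmp K lunit (cmp K del_C (cmp K assoc1 l)))))
      = col K B C f (add K (cmp K m f) k)"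
    unfolding assoc1_def del_C_def lunit_def copy_B_def assoc2_def id_G_def l_def
    using conditional_wiring_col[OF m k f g idm_hom] idm_right[OF k] by simp
  have wiring_n: "cmp K id_G (cmp K assoc2 (cmp K copy_B (cmp K lunit (cmp K del_C (cmp K assoc1 n)))))
      = graph K B C m"
    unfolding assoc1_def del_C_def lunit_def copy_B_def assoc2_def id_G_def n_def graph_def
    using conditional_wiring_col[OF m k p1_hom p2_hom zero_hom] cmp_zero_right[OF k]
      add_zero[OF cmp_hom[OF p1_hom m]]
    by simp
  have wiring_x: "cmp K id_G (cmp K assoc2 (cmp K copy_B (cmp K lunit (cmp K del_C (cmp K assoc1 x)))))
      = col K B C s (cmp K m s)"
    unfolding assoc1_def del_C_def lunit_def copy_B_def assoc2_def id_G_def x_def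
    using conditional_wiring_col[OF m k s t zero_hom] cmp_zero_right[OF k]
      add_zero[OF cmp_hom[OF s m]]
    by simp
  have n3: "cmp K assoc1 n \<in> hom K (bip K B C) (bip K B (bip K C A))"
    and n4: "cmp K del_C (cmp K assoc1 n) \<in> hom K (bip K B C) (bip K B (bip K (zobj K) A))"
    and n5: "cmp K lunit (cmp K del_C (cmp K assoc1 n)) \<in> hom K (bip K B C) (bip K B A)"
    and n6: "cmp K copy_B (cmp K lunit (cmp K del_C (cmp K assoc1 n)))
      \<in> hom K (bip K B C) (bip K (bip K B B) A)"
    and n7: "cmp K assoc2 (cmp K copy_B (cmp K lunit (cmp K del_C (cmp K assoc1 n))))
      \<in> hom K (bip K B C) (bip K B (bip K B A))"
    and x3: "cmp K assoc1 x \<in> hom K X (bip K B (bip K C A))"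
    and x4: "cmp K del_C (cmp K assoc1 x) \<in> hom K X (bip K B (bip K (zobj K) A))"
    and x5: "cmp K lunit (cmp K del_C (cmp K assoc1 x)) \<in> hom K X (bip K B A)"
    and x6: "cmp K copy_B (cmp K lunit (cmp K del_C (cmp K assoc1 x)))
      \<in> hom K X (bip K (bip K B B) A)"
    using assoc1_hom del_C_hom lunit_hom copy_B_hom assoc2_hom nh xh by (blast intro: cmp_hom)+
  show ?thesis
    unfolding is_conditional_def gassoc_def assoc1_def[symmetric] assoc2_def[symmetric]
      copy_step tensor_del tensor_lunit tensor_copy tensor_G
      gcomp_det_sandwich[OF assoc1_hom nh S xh] gcomp_det_sandwich[OF del_C_hom n3 S x3]
      gcomp_det_sandwich[OF lunit_hom n4 S x4] gcomp_det_sandwich[OF copy_B_hom n5 S x5]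
      gcomp_det_sandwich[OF assoc2_hom n6 S x6] gcomp_sandwich[OF id_G_hom n7 S]
      wiring_l wiring_n wiring_x ..
qed

lemma conditional_covariance_entries:
  assumes m: "m \<in> hom K B C" and \<eta>: "\<eta> \<in> hom K C C"
    and \<alpha>: "\<alpha> \<in> hom K B B" and \<beta>: "\<beta> \<in> hom K C B" and \<delta>: "\<delta> \<in> hom K C C"
    and eq: "add K (dsum K B B C C (zero K B B) \<eta>)
        (cmp K (cmp K (graph K B C m) (mat2 K B C B C \<alpha> \<beta> (dag K \<beta>) \<delta>)) (dag K (graph K B C m)))
      = mat2 K B C B C \<alpha> \<beta> (dag K \<beta>) \<delta>"
  shows "cmp K m \<alpha> = dag K \<beta>" and "\<eta> = sub K \<delta> (cmp K m \<beta>)"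
proof -
  have \<beta>': "dag K \<beta> \<in> hom K B C" using \<beta> by (rule dag_hom)
  have ma: "cmp K m \<alpha> \<in> hom K B C" and am: "cmp K \<alpha> (dag K m) \<in> hom K C B"
    and mam: "cmp K m (cmp K \<alpha> (dag K m)) \<in> hom K C C" and m\<beta>: "cmp K m \<beta> \<in> hom K C C"
    using m \<alpha> \<beta> by (blast intro: hom_rules)+
  have "mat2 K B C B C \<alpha> (cmp K \<alpha> (dag K m)) (cmp K m \<alpha>) (add K \<eta> (cmp K m (cmp K \<alpha> (dag K m))))
      = mat2 K B C B C \<alpha> \<beta> (dag K \<beta>) \<delta>"
    using eq
    unfolding graph_mat2_graph_dag[OF m \<alpha> \<beta> \<beta>' \<delta>] dsum_def
      mat2_add[OF zero_hom zero_hom zero_hom \<eta> \<alpha> am ma mam]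
    by (simp add: zero_add \<alpha> am ma)
  then have "cmp K \<alpha> (dag K m) = \<beta>" and m\<alpha>: "cmp K m \<alpha> = dag K \<beta>"
    and "add K \<eta> (cmp K m (cmp K \<alpha> (dag K m))) = \<delta>"
    using mat2_eq_iff[OF \<alpha> am ma add_hom[OF \<eta> mam] \<alpha> \<beta> \<beta>' \<delta>] by blast+
  then have "add K (cmp K m \<beta>) \<eta> = \<delta>" using add_comm[OF \<eta> m\<beta>] by simp
  then show "\<eta> = sub K \<delta> (cmp K m \<beta>)" by (rule add_implies_sub[OF m\<beta> \<eta>])
  show "cmp K m \<alpha> = dag K \<beta>" by (rule m\<alpha>)
qed

end

theorem mainTheorem6:
  fixes K :: "('o, 'm) dacat"
  assumes cat: "dagger_additive K"
    and f: "f \<in> hom K A B" and g: "g \<in> hom K A C"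
    and \<alpha>: "\<alpha> \<in> hom K B B" and \<beta>: "\<beta> \<in> hom K C B" and \<delta>: "\<delta> \<in> hom K C C"
    and s: "s \<in> hom K X B" and t: "t \<in> hom K X C"
    and Fpos: "dpos K (bip K B C) (mat2 K B C B C \<alpha> \<beta> (dag K \<beta>) \<delta>)"
    and m: "m \<in> hom K B C" and k: "k \<in> hom K A C"
    and \<eta>: "\<eta> \<in> hom K C C" and \<eta>pos: "dpos K C \<eta>" and u: "u \<in> hom K X C"
    and cond: "is_conditional K X A B C (row K B A m k, \<eta>, u)
                 (col K B C f g, mat2 K B C B C \<alpha> \<beta> (dag K \<beta>) \<delta>, col K B C s t)"
  shows "k = sub K g (cmp K m f) \<and> cmp K m \<alpha> = dag K \<beta>
         \<and> \<eta> = sub K \<delta> (cmp K m \<beta>) \<and> u = sub K t (cmp K m s)"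
proof -
  interpret dagger_additive K by (rule cat)
  have S: "mat2 K B C B C \<alpha> \<beta> (dag K \<beta>) \<delta> \<in> hom K (bip K B C) (bip K B C)"
    using \<alpha> \<beta> \<delta> by (blast intro: hom_rules)
  have mf: "cmp K m f \<in> hom K A C" and ms: "cmp K m s \<in> hom K X C"
    using m f s by (blast intro: hom_rules)+
  note composite = cond[unfolded is_conditional_iff[OF f g S s t m k \<eta> u]]
  have "add K (cmp K m f) k = g"
    using composite col_eq_iff[OF f add_hom[OF mf k] f g] by simp
  then have "k = sub K g (cmp K m f)" by (rule add_implies_sub[OF mf k])
  moreover have "add K u (cmp K m s) = t"
    using composite col_add[OF zero_hom u s ms] zero_add[OF s]
      col_eq_iff[OF s add_hom[OF u ms] s t] by simp
  then have "u = sub K t (cmp K m s)"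
    using add_comm[OF u ms] add_implies_sub[OF ms u] by simp
  moreover have "cmp K m \<alpha> = dag K \<beta>" and "\<eta> = sub K \<delta> (cmp K m \<beta>)"
    using conditional_covariance_entries[OF m \<eta> \<alpha> \<beta> \<delta>] composite by simp_all
  ultimately show ?thesis by blast
qed

end
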